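(* Consider the modification of MultiQT in which the forecast is $q_t=\textsc{Sort}(b_t+\tilde\theta_t)$ and the hidden offsets are updated by $\tilde\theta_{t+1}^{\alpha}=\tilde\theta_t^{\alpha}-\eta(\mathbb{1}\{y_t\le q_t^{\alpha}\}-\alpha)$ for each $\alpha\in\mathcal{A}$. There exist a set of levels $\mathcal{A}$ and a sequence $(y_t,b_t)$ with $|y_t-b_t^{\alpha}|<R$ for all $\alpha,t$ (for some $R>0$) such that for some $\alpha\in\mathcal{A}$, $\lim_{T\to\infty}\frac1T\sum_{t=1}^T\mathbb{1}\{y_t\le q_t^{\alpha}\}\ne\alpha$.
   Context: $\mathcal{A}=\{\alpha_1<\dots<\alpha_m\}\subset(0,1)$ is a set of quantile levels, $\eta>0$ a learning rate, base forecasts $b_t$ have nondecreasing entries, and $\textsc{Sort}(v)$ is the vector whose $i$-th entry is the $i$-th smallest entry of $v$. *)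

theory Defs
  imports Complex_Main
begin

text \<open>Levels A = [alpha_1 < ... < alpha_m] as a list; vectors indexed by positions 0..m-1.
  Time is indexed from 0 (t = 0 corresponds to the paper's t = 1).\<close>

fun mqt_theta :: "real \<Rightarrow> real list \<Rightarrow> (nat \<Rightarrow> real) \<Rightarrow> (nat \<Rightarrow> real list) \<Rightarrow> nat \<Rightarrow> real list" where
  "mqt_theta eta A y b 0 = replicate (length A) 0"
| "mqt_theta eta A y b (Suc t) =
     (let th = mqt_theta eta A y b t;
          q = sort (map2 (+) (b t) th)
      in map (\<lambda>i. th ! i - eta * (of_bool (y t \<le> q ! i) - A ! i)) [0..<length A])"

definition mqt_forecast :: "real \<Rightarrow> real list \<Rightarrow> (nat \<Rightarrow> real) \<Rightarrow> (nat \<Rightarrow> real list) \<Rightarrow> nat \<Rightarrow> real list" where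
  "mqt_forecast eta A y b t = sort (map2 (+) (b t) (mqt_theta eta A y b t))"

end

theory Submission
  imports Defs
begin

text \<open>Take levels 1/4 < 3/4. At time 0 the observation 1 lies strictly between the base
  forecasts 0 and 2, so the offset of level 1/4 moves up and that of level 3/4 moves down.
  From then on the base forecast is flat at the observation 0, so sorting hands the negative
  offset of level 3/4 to the lower quantile: level 1/4 is never covered, level 3/4 always is,
  and the offsets keep drifting apart as \<plusminus>\<eta>t/4. The empirical coverage of
  level 1/4 is therefore 0.\<close>

definition crossing_levels :: "real list" where
  "crossing_levels = [1/4, 3/4]"

definition crossing_obs :: "nat \<Rightarrow> real" where
  "crossing_obs t = (if t = 0 then 1 else 0)"

definition crossing_base :: "nat \<Rightarrow> real list" where
  "crossing_base t = (if t = 0 then [0, 2] else [0, 0])"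

abbreviation crossing_theta :: "real \<Rightarrow> nat \<Rightarrow> real list" where
  "crossing_theta eta \<equiv> mqt_theta eta crossing_levels crossing_obs crossing_base"

abbreviation crossing_forecast :: "real \<Rightarrow> nat \<Rightarrow> real list" where
  "crossing_forecast eta \<equiv> mqt_forecast eta crossing_levels crossing_obs crossing_base"

lemma crossing_theta_eq:
  assumes "eta > 0"
  shows "crossing_theta eta t = [eta * t / 4, - (eta * t / 4)]"
proof (induction t)
  case 0
  show ?case
    by (simp add: crossing_levels_def)
next
  case (Suc t)
  let ?q = "sort (map2 (+) (crossing_base t) [eta * t / 4, - (eta * t / 4)])"
  have "\<not> crossing_obs t \<le> ?q ! 0" and "crossing_obs t \<le> ?q ! 1"
    using assms by (cases t; simp add: crossing_base_def crossing_obs_def mult_le_0_iff)+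
  then show ?case
    unfolding mqt_theta.simps(2) Let_def Suc.IH
    by (simp add: crossing_levels_def upt_rec field_simps)
qed

lemma crossing_lowest_level_never_covered:
  assumes "eta > 0"
  shows "\<not> crossing_obs t \<le> crossing_forecast eta t ! 0"
  using assms
  by (cases t) (simp_all add: mqt_forecast_def crossing_theta_eq crossing_base_def crossing_obs_def
      mult_le_0_iff del: mqt_theta.simps)

lemma crossing_obs_near_base:
  assumes "i < length crossing_levels"
  shows "\<bar>crossing_obs t - crossing_base t ! i\<bar> < 2"
proof -
  have "i = 0 \<or> i = 1"
    using assms by (auto simp: crossing_levels_def)
  then show ?thesis
    by (auto simp: crossing_obs_def crossing_base_def)
qed

theorem proposition13:
  fixes eta :: real
  assumes "eta > 0"
  shows "\<exists>(A :: real list) (y :: nat \<Rightarrow> real) (b :: nat \<Rightarrow> real list) (R :: real).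
           A \<noteq> [] \<and> sorted_wrt (<) A \<and> (\<forall>a\<in>set A. 0 < a \<and> a < 1) \<and>
           (\<forall>t. length (b t) = length A \<and> sorted (b t)) \<and>
           R > 0 \<and> (\<forall>t i. i < length A \<longrightarrow> \<bar>y t - b t ! i\<bar> < R) \<and>
           (\<exists>i < length A. \<exists>L.
              ((\<lambda>T. (\<Sum>t<T. of_bool (y t \<le> mqt_forecast eta A y b t ! i)) / real T) \<longlonglongrightarrow> L)
              \<and> L \<noteq> A ! i)"
proof -
  have "(\<lambda>T. (\<Sum>t<T. of_bool (crossing_obs t \<le> crossing_forecast eta t ! 0)) / real T)
          \<longlonglongrightarrow> 0"
    using crossing_lowest_level_never_covered[OF assms] by simp
  then have "\<exists>i < length crossing_levels. \<exists>L.
      ((\<lambda>T. (\<Sum>t<T. of_bool (crossing_obs t \<le> crossing_forecast eta t ! i)) / real T)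
         \<longlonglongrightarrow> L) \<and> L \<noteq> crossing_levels ! i"
    by (intro exI[of _ 0] conjI exI[of _ 0]) (simp_all add: crossing_levels_def)
  moreover have "crossing_levels \<noteq> [] \<and> sorted_wrt (<) crossing_levels \<and>
                   (\<forall>a\<in>set crossing_levels. 0 < a \<and> a < 1)"
    by (simp add: crossing_levels_def)
  moreover have "length (crossing_base t) = length crossing_levels \<and> sorted (crossing_base t)" for t
    by (simp add: crossing_levels_def crossing_base_def)
  ultimately show ?thesis
    using crossing_obs_near_base
    by (intro exI[of _ crossing_levels] exI[of _ crossing_obs] exI[of _ crossing_base] exI[of _ 2])
      (simp only: zero_less_numeral, blast)
qed

end
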